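(* Let $\Gamma$ be a group having a normal abelian subgroup $T$ with the following properties: (i) there is an integer $d \ge 1$ such that $T$ is isomorphic to $\mathbf{Z}^d$; (ii) the action of $\Gamma/T$ on $T$ induced by conjugation is faithful; (iii) the associated representation of $\Gamma/T$ on $T \otimes_{\mathbf Z} \mathbf Q \cong \mathbf Q^d$ is irreducible. Then $\Gamma$ is indecomposable.
   Context: A group $\Gamma$ is called indecomposable if $\Gamma \neq \{1\}$ and, for every isomorphism of $\Gamma$ with a direct product $\Gamma_1 \times \Gamma_2$, one of the groups $\Gamma_1, \Gamma_2$ is trivial. *)

theory Defs
  imports "HOL-Algebra.Algebra"
begin

definition zd_group :: "nat \<Rightarrow> (nat \<Rightarrow> int) monoid" where
  "zd_group d = product_group {..<d} (\<lambda>_. integer_group)"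

definition zd_basis :: "nat \<Rightarrow> nat \<Rightarrow> (nat \<Rightarrow> int)" where
  "zd_basis d j = (\<lambda>i\<in>{..<d}. if i = j then 1 else 0)"

text \<open>The action of Gamma/T on T induced by conjugation is faithful: a coset gT acting
  trivially on T by conjugation is the identity coset T.\<close>
definition conj_action_faithful :: "('g, 'm) monoid_scheme \<Rightarrow> 'g set \<Rightarrow> bool" where
  "conj_action_faithful G T \<longleftrightarrow>
     (\<forall>g \<in> carrier G. (\<forall>t \<in> T. g \<otimes>\<^bsub>G\<^esub> t \<otimes>\<^bsub>G\<^esub> inv\<^bsub>G\<^esub> g = t) \<longrightarrow> T #>\<^bsub>G\<^esub> g = T)"

text \<open>Integer matrix of conjugation by g on T, in the coordinates given by an
  isomorphism phi : T -> Z^d (entry (i,j) = i-th coordinate of the image of e_j).\<close>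
definition conj_matrix ::
  "('g, 'm) monoid_scheme \<Rightarrow> 'g set \<Rightarrow> ('g \<Rightarrow> nat \<Rightarrow> int) \<Rightarrow> nat \<Rightarrow> 'g \<Rightarrow> nat \<Rightarrow> nat \<Rightarrow> int" where
  "conj_matrix G T \<phi> d g i j =
     \<phi> (g \<otimes>\<^bsub>G\<^esub> the_inv_into T \<phi> (zd_basis d j) \<otimes>\<^bsub>G\<^esub> inv\<^bsub>G\<^esub> g) i"

text \<open>Q^d = T \<otimes>_Z Q, as rational vectors indexed by {..<d} (zero outside).\<close>
definition ratvecs :: "nat \<Rightarrow> (nat \<Rightarrow> rat) set" where
  "ratvecs d = {v. \<forall>i\<ge>d. v i = 0}"

definition rat_rep ::
  "('g, 'm) monoid_scheme \<Rightarrow> 'g set \<Rightarrow> ('g \<Rightarrow> nat \<Rightarrow> int) \<Rightarrow> nat \<Rightarrow> 'g \<Rightarrow> (nat \<Rightarrow> rat) \<Rightarrow> (nat \<Rightarrow> rat)" where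
  "rat_rep G T \<phi> d g v =
     (\<lambda>i. if i < d then (\<Sum>j<d. of_int (conj_matrix G T \<phi> d g i j) * v j) else 0)"

definition rat_subspace :: "nat \<Rightarrow> (nat \<Rightarrow> rat) set \<Rightarrow> bool" where
  "rat_subspace d W \<longleftrightarrow> W \<subseteq> ratvecs d \<and> (\<lambda>_. 0) \<in> W \<and>
     (\<forall>v\<in>W. \<forall>w\<in>W. (\<lambda>i. v i + w i) \<in> W) \<and>
     (\<forall>c::rat. \<forall>v\<in>W. (\<lambda>i. c * v i) \<in> W)"

definition rat_rep_irreducible ::
  "('g, 'm) monoid_scheme \<Rightarrow> 'g set \<Rightarrow> ('g \<Rightarrow> nat \<Rightarrow> int) \<Rightarrow> nat \<Rightarrow> bool" where
  "rat_rep_irreducible G T \<phi> d \<longleftrightarrow> ratvecs d \<noteq> {\<lambda>_. 0} \<and>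
     (\<forall>W. rat_subspace d W \<and> (\<forall>g \<in> carrier G. rat_rep G T \<phi> d g ` W \<subseteq> W)
          \<longrightarrow> W = {\<lambda>_. 0} \<or> W = ratvecs d)"

end

theory Submission
  imports Defs
begin

text \<open>Let \<open>G \<cong> G1 \<times> G2\<close> and let N1, N2 be the kernels of the two projections: normal
  subgroups of G with trivial intersection. For a normal subgroup K of G inside T, the rational
  span of K in \<open>T \<otimes> Q = Q^d\<close> is G-invariant, so by irreducibility a nontrivial K contains a
  positive power of every element of T. As T is torsion-free, \<open>T \<inter> N1\<close> and \<open>T \<inter> N2\<close> cannot
  both be nontrivial; say \<open>T \<inter> N1 = 1\<close>. Then N1 commutes with T elementwise, so N1 lies in T
  by faithfulness, and hence \<open>N1 = 1\<close>.\<close>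

lemma group_zd_group [simp]: "group (zd_group d)"
  by (simp add: zd_group_def)

lemma carrier_zd_group: "carrier (zd_group d) = {..<d} \<rightarrow>\<^sub>E UNIV"
  by (simp add: zd_group_def)

lemma one_zd_group [simp]: "\<one>\<^bsub>zd_group d\<^esub> = (\<lambda>i\<in>{..<d}. 0)"
  by (simp add: zd_group_def)

lemma mult_zd_group [simp]: "x \<otimes>\<^bsub>zd_group d\<^esub> y = (\<lambda>i\<in>{..<d}. x i + y i)"
  by (simp add: zd_group_def)

lemma coordinate_hom_zd_group: "i < d \<Longrightarrow> (\<lambda>x. x i) \<in> hom (zd_group d) integer_group"
  by (rule homI) (auto simp: carrier_zd_group)

lemma int_pow_zd_group_apply:
  assumes "x \<in> carrier (zd_group d)" "i < d"
  shows "(x [^]\<^bsub>zd_group d\<^esub> (n::int)) i = n * x i"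
  using hom_int_pow[OF coordinate_hom_zd_group[OF assms(2)] assms(1)] by simp

lemma zd_basis_in_carrier [simp]: "zd_basis d j \<in> carrier (zd_group d)"
  by (auto simp: zd_basis_def carrier_zd_group)

lemma zd_group_eqI:
  "x \<in> carrier (zd_group d) \<Longrightarrow> y \<in> carrier (zd_group d) \<Longrightarrow> (\<And>i. i < d \<Longrightarrow> x i = y i) \<Longrightarrow> x = y"
  by (auto simp: carrier_zd_group intro: PiE_ext)

lemma hom_zd_group_integer_group_supported:
  assumes f: "f \<in> hom (zd_group d) integer_group"
    and "finite S" "S \<subseteq> {..<d}"
    and "x \<in> carrier (zd_group d)" "\<And>j. j < d \<Longrightarrow> j \<notin> S \<Longrightarrow> x j = 0"
  shows "f x = (\<Sum>j\<in>S. x j * f (zd_basis d j))"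
  using assms(2-)
proof (induction S arbitrary: x rule: finite_induct)
  case empty
  then have "x = \<one>\<^bsub>zd_group d\<^esub>" by (intro zd_group_eqI) (auto simp: carrier_zd_group)
  then show ?case using hom_one[OF f] by (simp del: one_zd_group)
next
  case (insert k S)
  interpret Z: group "zd_group d" by simp
  define y where "y = x(k := 0)"
  have k: "k < d" using insert.prems by simp
  have y: "y \<in> carrier (zd_group d)"
    using insert.prems k by (auto simp: y_def carrier_zd_group PiE_iff extensional_def)
  have e: "zd_basis d k [^]\<^bsub>zd_group d\<^esub> x k \<in> carrier (zd_group d)"
    by (rule Z.int_pow_closed) simp
  have "x = y \<otimes>\<^bsub>zd_group d\<^esub> zd_basis d k [^]\<^bsub>zd_group d\<^esub> x k"
  proof (rule zd_group_eqI)
    show "y \<otimes>\<^bsub>zd_group d\<^esub> zd_basis d k [^]\<^bsub>zd_group d\<^esub> x k \<in> carrier (zd_group d)"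
      using y e by (rule Z.m_closed)
    show "x i = (y \<otimes>\<^bsub>zd_group d\<^esub> zd_basis d k [^]\<^bsub>zd_group d\<^esub> x k) i" if "i < d" for i
      using that by (simp add: int_pow_zd_group_apply[OF zd_basis_in_carrier]) (simp add: y_def zd_basis_def)
  qed (rule insert.prems)
  then have "f x = f y + x k * f (zd_basis d k)"
    using hom_mult[OF f y e] hom_int_pow[OF f zd_basis_in_carrier] by simp
  moreover have "f y = (\<Sum>j\<in>S. x j * f (zd_basis d j))"
    using insert y by (auto simp: y_def intro!: sum.cong)
  ultimately show ?case using insert.hyps by simp
qed

lemma hom_zd_group_integer_group_eq_sum:
  assumes "f \<in> hom (zd_group d) integer_group" "x \<in> carrier (zd_group d)"
  shows "f x = (\<Sum>j<d. x j * f (zd_basis d j))"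
  by (rule hom_zd_group_integer_group_supported[OF assms(1) finite_lessThan order_refl assms(2)]) simp

lemma rat_rep_scale: "rat_rep G T \<phi> d g (\<lambda>i. c * v i) = (\<lambda>i. c * rat_rep G T \<phi> d g v i)"
  by (simp add: rat_rep_def sum_distrib_left algebra_simps fun_eq_iff)

locale lattice_normal_subgroup = normal T G
  for T and G :: "('g, 'm) monoid_scheme" (structure) +
  fixes \<phi> :: "'g \<Rightarrow> nat \<Rightarrow> int" and d :: nat
  assumes coordinates_iso: "\<phi> \<in> iso (G\<lparr>carrier := T\<rparr>) (zd_group d)"
begin

lemma coordinates_hom: "\<phi> \<in> hom (G\<lparr>carrier := T\<rparr>) (zd_group d)"
  using coordinates_iso by (simp add: iso_def)

lemma coordinates_bij: "bij_betw \<phi> T (carrier (zd_group d))"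
  using coordinates_iso by (simp add: iso_def)

lemma coordinates_inj: "inj_on \<phi> T"
  using coordinates_bij by (simp add: bij_betw_def)

lemma coordinates_in_carrier: "t \<in> T \<Longrightarrow> \<phi> t \<in> carrier (zd_group d)"
  using coordinates_bij by (auto dest: bij_betwE)

lemma coordinates_one: "\<phi> \<one> = \<one>\<^bsub>zd_group d\<^esub>"
  using hom_one[OF coordinates_hom subgroup_imp_group[OF subgroup_axioms] group_zd_group] by simp

lemma coordinates_mult: "t \<in> T \<Longrightarrow> u \<in> T \<Longrightarrow> \<phi> (t \<otimes> u) = \<phi> t \<otimes>\<^bsub>zd_group d\<^esub> \<phi> u"
  using hom_mult[OF coordinates_hom] by simp

lemma coordinates_int_pow: "t \<in> T \<Longrightarrow> \<phi> (t [^] (k::int)) = \<phi> t [^]\<^bsub>zd_group d\<^esub> k"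
  using hom_int_pow[OF coordinates_hom _ subgroup_imp_group[OF subgroup_axioms] group_zd_group]
    int_pow_consistent[OF subgroup_axioms]
  by simp

lemma the_inv_coordinates:
  assumes "x \<in> carrier (zd_group d)"
  shows "the_inv_into T \<phi> x \<in> T" "\<phi> (the_inv_into T \<phi> x) = x"
  using assms coordinates_bij
  by (auto simp: bij_betw_def intro: the_inv_into_into f_the_inv_into_f)

lemma the_inv_coordinates_hom: "the_inv_into T \<phi> \<in> hom (zd_group d) (G\<lparr>carrier := T\<rparr>)"
proof (rule homI)
  fix x y assume x: "x \<in> carrier (zd_group d)" and y: "y \<in> carrier (zd_group d)"
  have "\<phi> (the_inv_into T \<phi> x \<otimes> the_inv_into T \<phi> y) = x \<otimes>\<^bsub>zd_group d\<^esub> y"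
    using x y by (simp add: coordinates_mult the_inv_coordinates)
  then show "the_inv_into T \<phi> (x \<otimes>\<^bsub>zd_group d\<^esub> y)
      = the_inv_into T \<phi> x \<otimes>\<^bsub>G\<lparr>carrier := T\<rparr>\<^esub> the_inv_into T \<phi> y"
    using x y by (auto intro: the_inv_into_f_eq[OF coordinates_inj] simp: the_inv_coordinates)
qed (simp add: the_inv_coordinates)

lemma conj_hom:
  assumes g: "g \<in> carrier G"
  shows "(\<lambda>t. g \<otimes> t \<otimes> inv g) \<in> hom (G\<lparr>carrier := T\<rparr>) (G\<lparr>carrier := T\<rparr>)"
proof (rule homI)
  fix t u assume "t \<in> carrier (G\<lparr>carrier := T\<rparr>)" "u \<in> carrier (G\<lparr>carrier := T\<rparr>)"
  with g show "g \<otimes> (t \<otimes>\<^bsub>G\<lparr>carrier := T\<rparr>\<^esub> u) \<otimes> inv g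
      = (g \<otimes> t \<otimes> inv g) \<otimes>\<^bsub>G\<lparr>carrier := T\<rparr>\<^esub> (g \<otimes> u \<otimes> inv g)"
    by (simp add: m_assoc subset inv_solve_left)
qed (simp add: g inv_op_closed2)

lemma coordinates_conj:
  assumes g: "g \<in> carrier G" and t: "t \<in> T" and i: "i < d"
  shows "\<phi> (g \<otimes> t \<otimes> inv g) i = (\<Sum>j<d. conj_matrix G T \<phi> d g i j * \<phi> t j)"
proof -
  define f where "f = (\<lambda>x. x i) \<circ> \<phi> \<circ> (\<lambda>t. g \<otimes> t \<otimes> inv g) \<circ> the_inv_into T \<phi>"
  have "f \<in> hom (zd_group d) integer_group"
    unfolding f_def
    by (intro Group.hom_compose[OF the_inv_coordinates_hom] Group.hom_compose[OF conj_hom[OF g]]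
        Group.hom_compose[OF coordinates_hom coordinate_hom_zd_group[OF i]])
  from hom_zd_group_integer_group_eq_sum[OF this coordinates_in_carrier[OF t]]
  show ?thesis
    using t by (simp add: f_def conj_matrix_def the_inv_into_f_f[OF coordinates_inj] mult.commute)
qed

definition rat_coords :: "'g \<Rightarrow> nat \<Rightarrow> rat" where
  "rat_coords t = (\<lambda>i. if i < d then of_int (\<phi> t i) else 0)"

lemma rat_coords_one: "rat_coords \<one> = (\<lambda>_. 0)"
  by (simp add: rat_coords_def coordinates_one fun_eq_iff)

lemma rat_coords_mult: "t \<in> T \<Longrightarrow> u \<in> T \<Longrightarrow> rat_coords (t \<otimes> u) = (\<lambda>i. rat_coords t i + rat_coords u i)"
  by (simp add: rat_coords_def coordinates_mult fun_eq_iff)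

lemma rat_coords_int_pow: "t \<in> T \<Longrightarrow> rat_coords (t [^] (k::int)) = (\<lambda>i. of_int k * rat_coords t i)"
  by (simp add: rat_coords_def coordinates_int_pow int_pow_zd_group_apply coordinates_in_carrier fun_eq_iff)

lemma rat_coords_eq_iff: "s \<in> T \<Longrightarrow> t \<in> T \<Longrightarrow> rat_coords s = rat_coords t \<longleftrightarrow> s = t"
proof
  assume s: "s \<in> T" and t: "t \<in> T" and "rat_coords s = rat_coords t"
  then have "\<phi> s i = \<phi> t i" if "i < d" for i
    using that by (simp add: rat_coords_def fun_eq_iff) (metis of_int_eq_iff)
  then have "\<phi> s = \<phi> t"
    using coordinates_in_carrier[OF s] coordinates_in_carrier[OF t] by (intro zd_group_eqI)
  then show "s = t" using coordinates_inj s t by (auto dest: inj_onD)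
qed simp

lemma rat_rep_rat_coords:
  assumes "g \<in> carrier G" "t \<in> T"
  shows "rat_rep G T \<phi> d g (rat_coords t) = rat_coords (g \<otimes> t \<otimes> inv g)"
  using assms by (simp add: rat_rep_def rat_coords_def coordinates_conj fun_eq_iff)

lemma torsion_free:
  assumes t: "t \<in> T" and "k \<noteq> 0" and "t [^] (k::int) = \<one>"
  shows "t = \<one>"
proof -
  have "rat_coords (t [^] k) = (\<lambda>_. 0)" using assms by (simp add: rat_coords_one)
  then have "rat_coords t = rat_coords \<one>"
    using \<open>k \<noteq> 0\<close> by (simp add: rat_coords_int_pow[OF t] rat_coords_one fun_eq_iff)
  then show ?thesis using t by (simp add: rat_coords_eq_iff)
qed

text \<open>The image of \<open>K \<otimes> Q\<close> in \<open>T \<otimes> Q = Q^d\<close>.\<close>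
definition rat_span :: "'g set \<Rightarrow> (nat \<Rightarrow> rat) set" where
  "rat_span K = {v. \<exists>n::int. n > 0 \<and> (\<exists>t\<in>K. (\<lambda>i. of_int n * v i) = rat_coords t)}"

lemma rat_coords_in_rat_span: "t \<in> K \<Longrightarrow> rat_coords t \<in> rat_span K"
  unfolding rat_span_def by (auto intro!: exI[of _ 1])

lemma rat_span_add:
  assumes K: "subgroup K G" "K \<subseteq> T" and "v \<in> rat_span K" "w \<in> rat_span K"
  shows "(\<lambda>i. v i + w i) \<in> rat_span K"
proof -
  obtain n m t u where nm: "n > 0" "m > 0" "t \<in> K" "u \<in> K"
    and v: "(\<lambda>i. of_int n * v i) = rat_coords t" and w: "(\<lambda>i. of_int m * w i) = rat_coords u"
    using assms(3,4) by (auto simp: rat_span_def)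
  have tu: "t [^] m \<in> K" "u [^] n \<in> K"
    using nm K by (auto intro: subgroup_int_pow_closed)
  then have "t \<in> T" "u \<in> T" "t [^] m \<in> T" "u [^] n \<in> T" using nm K by auto
  then have "rat_coords (t [^] m \<otimes> u [^] n) = (\<lambda>i. of_int m * rat_coords t i + of_int n * rat_coords u i)"
    by (simp add: rat_coords_mult rat_coords_int_pow)
  also have "\<dots> = (\<lambda>i. of_int (n * m) * (v i + w i))"
    by (simp flip: v w add: algebra_simps)
  finally have "(\<lambda>i. of_int (n * m) * (v i + w i)) = rat_coords (t [^] m \<otimes> u [^] n)" ..
  moreover have "t [^] m \<otimes> u [^] n \<in> K" using subgroup.m_closed[OF K(1) tu] .
  ultimately show ?thesis
    using nm unfolding rat_span_def by (auto intro!: exI[of _ "n * m"])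
qed

lemma rat_span_scale:
  assumes K: "subgroup K G" "K \<subseteq> T" and "v \<in> rat_span K"
  shows "(\<lambda>i. c * v i) \<in> rat_span K"
proof -
  obtain n t where n: "n > 0" "t \<in> K" and v: "(\<lambda>i. of_int n * v i) = rat_coords t"
    using assms(3) by (auto simp: rat_span_def)
  obtain p q where c: "c = of_int p / of_int q" and "q > 0"
    by (metis quotient_of_denom_pos quotient_of_div surj_pair)
  have "(\<lambda>i. of_int (n * q) * (c * v i)) = rat_coords (t [^] p)"
    using n K \<open>q > 0\<close> by (auto simp: rat_coords_int_pow c fun_eq_iff simp flip: v)
  moreover have "t [^] p \<in> K" using n K by (auto intro: subgroup_int_pow_closed)
  ultimately show ?thesis
    using n \<open>q > 0\<close> unfolding rat_span_def by (auto intro!: exI[of _ "n * q"])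
qed

lemma rat_subspace_rat_span:
  assumes K: "subgroup K G" "K \<subseteq> T"
  shows "rat_subspace d (rat_span K)"
  unfolding rat_subspace_def
proof (intro conjI ballI allI subsetI)
  fix v assume "v \<in> rat_span K"
  then obtain n t where "n > 0" "(\<lambda>i. of_int n * v i) = rat_coords t"
    by (auto simp: rat_span_def)
  then have "of_int n * v i = 0" if "i \<ge> d" for i
    using that by (auto simp: rat_coords_def fun_eq_iff dest: spec[of _ i])
  then show "v \<in> ratvecs d" using \<open>n > 0\<close> by (simp add: ratvecs_def)
next
  show "(\<lambda>_. 0) \<in> rat_span K"
    using rat_coords_in_rat_span[OF subgroup.one_closed[OF K(1)]] by (simp add: rat_coords_one)
qed (use K rat_span_add rat_span_scale in blast)+

lemma rat_span_invariant:
  assumes K: "K \<lhd> G" "K \<subseteq> T" and g: "g \<in> carrier G"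
  shows "rat_rep G T \<phi> d g ` rat_span K \<subseteq> rat_span K"
proof clarify
  fix v assume "v \<in> rat_span K"
  then obtain n t where n: "n > 0" "t \<in> K" and v: "(\<lambda>i. of_int n * v i) = rat_coords t"
    by (auto simp: rat_span_def)
  have "(\<lambda>i. of_int n * rat_rep G T \<phi> d g v i) = rat_coords (g \<otimes> t \<otimes> inv g)"
    using n K g by (auto simp flip: rat_rep_scale rat_rep_rat_coords simp: v)
  moreover have "g \<otimes> t \<otimes> inv g \<in> K" using normal.inv_op_closed2[OF K(1) g n(2)] .
  ultimately show "rat_rep G T \<phi> d g v \<in> rat_span K"
    using n unfolding rat_span_def by blast
qed

lemma normal_subgroup_contains_powers:
  assumes irr: "rat_rep_irreducible G T \<phi> d"
    and K: "K \<lhd> G" "K \<subseteq> T" "k \<in> K" "k \<noteq> \<one>" and s: "s \<in> T"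
  obtains n :: int where "n > 0" "s [^] n \<in> K"
proof -
  have "rat_coords k \<noteq> rat_coords \<one>" using K by (auto simp: rat_coords_eq_iff)
  then have "rat_span K \<noteq> {\<lambda>_. 0}"
    using rat_coords_in_rat_span[OF K(3)] by (auto simp: rat_coords_one)
  then have "rat_span K = ratvecs d"
    using irr rat_subspace_rat_span[OF normal_imp_subgroup[OF K(1)] K(2)] rat_span_invariant[OF K(1,2)]
    unfolding rat_rep_irreducible_def by blast
  moreover have "rat_coords s \<in> ratvecs d" by (simp add: ratvecs_def rat_coords_def)
  ultimately have "rat_coords s \<in> rat_span K" by simp
  then obtain n t where "n > 0" "t \<in> K" "(\<lambda>i. of_int n * rat_coords s i) = rat_coords t"
    unfolding rat_span_def by blast
  moreover from this have "rat_coords (s [^] n) = rat_coords t" using s by (simp add: rat_coords_int_pow)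
  moreover have "s [^] n \<in> T" using s by (rule subgroup_int_pow_closed[OF subgroup_axioms])
  ultimately show ?thesis using that K(2) by (auto simp: rat_coords_eq_iff)
qed

lemma normal_T: "T \<lhd> G"
  by (simp add: normal_inv_iff subgroup_axioms inv_op_closed2)

lemma disjoint_normal_subgroups_meet_T_trivially:
  assumes irr: "rat_rep_irreducible G T \<phi> d"
    and N: "N1 \<lhd> G" "N2 \<lhd> G" "N1 \<inter> N2 \<subseteq> {\<one>}"
  shows "T \<inter> N1 \<subseteq> {\<one>} \<or> T \<inter> N2 \<subseteq> {\<one>}"
proof (rule ccontr)
  assume "\<not> ?thesis"
  then obtain k1 k2 where k1: "k1 \<in> T \<inter> N1" "k1 \<noteq> \<one>" and k2: "k2 \<in> T \<inter> N2" "k2 \<noteq> \<one>"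
    by blast
  have "T \<inter> N1 \<lhd> G" using normal_subgroup_intersect[OF normal_T N(1)] .
  then obtain n :: int where n: "n > 0" "k2 [^] n \<in> T \<inter> N1"
    using normal_subgroup_contains_powers[OF irr _ _ k1] k2 by blast
  moreover have "k2 [^] n \<in> N2"
    using k2 N(2) by (auto intro: subgroup_int_pow_closed normal_imp_subgroup)
  ultimately have "k2 [^] n = \<one>" using N(3) by blast
  then show False using torsion_free[of k2 n] k2 n by simp
qed

lemma normal_subgroup_disjoint_from_T_trivial:
  assumes faithful: "conj_action_faithful G T"
    and N: "N \<lhd> G" "N \<inter> T \<subseteq> {\<one>}"
  shows "N \<subseteq> {\<one>}"
proof
  fix g assume g: "g \<in> N"
  then have gG: "g \<in> carrier G" using N(1) normal_imp_subgroup subgroup.subset by blast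
  \<comment> \<open>Normal subgroups with trivial intersection commute, so g centralises T.\<close>
  have "g \<otimes> t \<otimes> inv g = t" if "t \<in> T" for t
    using normal_imp_commuting[OF N(1) normal_T N(2) g that] gG that subset
    by (simp add: m_assoc)
  then have "T #> g = T" using faithful gG unfolding conj_action_faithful_def by blast
  then have "g \<in> T" using rcos_self[OF gG subgroup_axioms] by simp
  then show "g \<in> {\<one>}" using g N(2) by blast
qed

lemma disjoint_normal_subgroups_trivial:
  assumes "rat_rep_irreducible G T \<phi> d" "conj_action_faithful G T"
    and "N1 \<lhd> G" "N2 \<lhd> G" "N1 \<inter> N2 \<subseteq> {\<one>}"
  shows "N1 \<subseteq> {\<one>} \<or> N2 \<subseteq> {\<one>}"
  using disjoint_normal_subgroups_meet_T_trivially[OF assms(1,3-5)]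
    normal_subgroup_disjoint_from_T_trivial[OF assms(2)] assms(3,4) by blast

lemma carrier_nontrivial:
  assumes "d \<ge> 1"
  shows "carrier G \<noteq> {\<one>}"
proof
  assume G: "carrier G = {\<one>}"
  define t where "t = the_inv_into T \<phi> (zd_basis d 0)"
  have "t \<in> T" "\<phi> t = zd_basis d 0"
    unfolding t_def using the_inv_coordinates zd_basis_in_carrier by blast+
  moreover from \<open>t \<in> T\<close> have "t = \<one>" using G subset by blast
  ultimately have "zd_basis d 0 0 = \<one>\<^bsub>zd_group d\<^esub> 0" using coordinates_one by simp
  then show False using assms by (simp add: zd_basis_def)
qed

end

lemma iso_DirProd_kernels:
  assumes h: "h \<in> iso G (G1 \<times>\<times> G2)" and "group G" "group G1" "group G2"
  shows "kernel G G2 (snd \<circ> h) \<lhd> G" "kernel G G1 (fst \<circ> h) \<lhd> G"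
    and "kernel G G2 (snd \<circ> h) \<inter> kernel G G1 (fst \<circ> h) \<subseteq> {\<one>\<^bsub>G\<^esub>}"
proof -
  have hom: "h \<in> hom G (G1 \<times>\<times> G2)" and inj: "inj_on h (carrier G)"
    using h by (auto simp: iso_def bij_betw_def)
  then have "fst \<circ> h \<in> hom G G1" "snd \<circ> h \<in> hom G G2" by (simp_all add: hom_pairwise)
  with assms(2-4) show "kernel G G2 (snd \<circ> h) \<lhd> G" "kernel G G1 (fst \<circ> h) \<lhd> G"
    by (simp_all add: group_hom.normal_kernel group_hom_def group_hom_axioms_def)
  have "h \<one>\<^bsub>G\<^esub> = (\<one>\<^bsub>G1\<^esub>, \<one>\<^bsub>G2\<^esub>)"
    using hom_one[OF hom assms(2) DirProd_group[OF assms(3,4)]] by simp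
  show "kernel G G2 (snd \<circ> h) \<inter> kernel G G1 (fst \<circ> h) \<subseteq> {\<one>\<^bsub>G\<^esub>}"
  proof
    fix x assume "x \<in> kernel G G2 (snd \<circ> h) \<inter> kernel G G1 (fst \<circ> h)"
    with \<open>h \<one>\<^bsub>G\<^esub> = _\<close> have "h x = h \<one>\<^bsub>G\<^esub>" "x \<in> carrier G"
      by (auto simp: kernel_def prod_eq_iff)
    then show "x \<in> {\<one>\<^bsub>G\<^esub>}"
      using inj_onD[OF inj] monoid.one_closed[OF group.is_monoid[OF assms(2)]] by blast
  qed
qed

lemma iso_DirProd_fst_trivial:
  assumes h: "h \<in> iso G (G1 \<times>\<times> G2)" and "group G" "group G1" "group G2"
    and "kernel G G2 (snd \<circ> h) \<subseteq> {\<one>\<^bsub>G\<^esub>}"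
  shows "carrier G1 = {\<one>\<^bsub>G1\<^esub>}"
proof -
  have hom: "h \<in> hom G (G1 \<times>\<times> G2)" and im: "h ` carrier G = carrier G1 \<times> carrier G2"
    using h by (auto simp: iso_def bij_betw_def)
  have "a = \<one>\<^bsub>G1\<^esub>" if a: "a \<in> carrier G1" for a
  proof -
    have "(a, \<one>\<^bsub>G2\<^esub>) \<in> h ` carrier G"
      using a im monoid.one_closed[OF group.is_monoid[OF assms(4)]] by simp
    then obtain x where x: "x \<in> carrier G" "h x = (a, \<one>\<^bsub>G2\<^esub>)" by force
    then have "x = \<one>\<^bsub>G\<^esub>" using assms(5) by (auto simp: kernel_def)
    then show ?thesis
      using x hom_one[OF hom assms(2) DirProd_group[OF assms(3,4)]] by simp
  qed
  then show ?thesis using group.is_monoid[OF assms(3)] by (auto intro: monoid.one_closed)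
qed

theorem proposition1:
  fixes G :: "('g, 'm) monoid_scheme" and T :: "'g set"
    and \<phi> :: "'g \<Rightarrow> nat \<Rightarrow> int" and d :: nat
  assumes "group G"
    and "T \<lhd> G"
    and "comm_group (G\<lparr>carrier := T\<rparr>)"
    and "d \<ge> 1"
    and "\<phi> \<in> iso (G\<lparr>carrier := T\<rparr>) (zd_group d)"
    and "conj_action_faithful G T"
    and "rat_rep_irreducible G T \<phi> d"
  shows "carrier G \<noteq> {\<one>\<^bsub>G\<^esub>} \<and>
    (\<forall>(G1 :: 'b monoid) (G2 :: 'c monoid). group G1 \<longrightarrow> group G2 \<longrightarrow> G \<cong> G1 \<times>\<times> G2
       \<longrightarrow> carrier G1 = {\<one>\<^bsub>G1\<^esub>} \<or> carrier G2 = {\<one>\<^bsub>G2\<^esub>})"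
proof -
  interpret lattice_normal_subgroup T G \<phi> d
    using assms(2,5) by (simp add: lattice_normal_subgroup_def lattice_normal_subgroup_axioms_def)
  have "carrier G1 = {\<one>\<^bsub>G1\<^esub>} \<or> carrier G2 = {\<one>\<^bsub>G2\<^esub>}"
    if G12: "group G1" "group G2" and "G \<cong> G1 \<times>\<times> G2" for G1 :: "'b monoid" and G2 :: "'c monoid"
  proof -
    obtain h where h: "h \<in> iso G (G1 \<times>\<times> G2)" using \<open>G \<cong> G1 \<times>\<times> G2\<close> by (auto simp: is_iso_def)
    then have h': "(\<lambda>(x, y). (y, x)) \<circ> h \<in> iso G (G2 \<times>\<times> G1)"
      using DirProd_commute_iso_set by (rule iso_set_trans)
    have "kernel G G2 (snd \<circ> h) \<subseteq> {\<one>\<^bsub>G\<^esub>} \<or> kernel G G1 (fst \<circ> h) \<subseteq> {\<one>\<^bsub>G\<^esub>}"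
      using disjoint_normal_subgroups_trivial[OF assms(7,6)] iso_DirProd_kernels[OF h is_group G12]
      by blast
    moreover have "snd \<circ> ((\<lambda>(x, y). (y, x)) \<circ> h) = fst \<circ> h" by (auto simp: case_prod_beta)
    ultimately show ?thesis
      using iso_DirProd_fst_trivial[OF h is_group G12] iso_DirProd_fst_trivial[OF h' is_group G12(2,1)]
      by auto
  qed
  then show ?thesis using carrier_nontrivial assms(4) by blast
qed

end
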